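(* Let $L>0$ be the constant of the quadratic upper bound below and let $0<\alpha\le 2/L$. There exists a constant $\rho_2>0$, independent of $k$, such that for every $k\ge1$ there are $A^{k+1}=\nabla_wH(w^{k+1},z^{k+1})$ and $B^{k+1}\in\partial_zH(w^{k+1},z^{k+1})$ with $$\big\|[A^{k+1};B^{k+1}]\big\|_2\le\rho_2\big\|[w^{k+1};z^{k+1}]-[w^k;z^k]\big\|_2 .$$
   Context: Data: $y\in\mathbb{R}^m$, $X\in\mathbb{R}^{m\times n}$ with rows $x_i^T$, preconditioned so that $X^TX=I_n$. Fix $\delta>0$. $S(x)=\frac{1}{2\sqrt{\delta}}x^2+\frac{\sqrt\delta}{2}$ if $|x|<\sqrt\delta$, $S(x)=|x|$ if $|x|\ge\sqrt\delta$. $H(w,z)=\tfrac12\|y-Xw-z\|_2^2+\delta\sum_{i=1}^m\frac{|z_i|}{S(y_i-x_i^Tw)}$, with $\nabla_w H(w,z)=-X^T(y-Xw-z)+\delta X^Tv$, $v_i=\frac{|z_i|S'(y_i-x_i^Tw)}{S(y_i-x_i^Tw)^2}$. $T(x)=0$ if $|x|\le\sqrt\delta$, $T(x)=x-\delta/x$ if $|x|>\sqrt\delta$, componentwise. SARM iteration: $w^0=0$, $z^0=0$, $w^{k+1}=w^k-\alpha\nabla_wH(w^k,z^k)$, $z^{k+1}=T(y-Xw^{k+1})$. $L>0$ is a constant depending only on $\delta$ such that for all $w,w'$ and all $z$ with $|z_i|\le S(y_i-x_i^Tw)$: $H(w',z)\le H(w,z)+\nabla_wH(w,z)^T(w'-w)+\frac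 L2\|w'-w\|_2^2$. For a proper lsc $\sigma:\mathbb{R}^d\to(-\infty,\infty]$, the Fréchet subdifferential $\hat\partial\sigma(b)$ is the set of $u$ with $\liminf_{a\to b,a\ne b}\frac{\sigma(a)-\sigma(b)-\langle u,a-b\rangle}{\|a-b\|}\ge0$, and the limiting subdifferential is $\partial\sigma(x)=\{u:\exists x_k\to x,\ \sigma(x_k)\to\sigma(x),\ u_k\in\hat\partial\sigma(x_k),\ u_k\to u\}$. $\partial_zH(w,z)$ is the limiting subdifferential of $z\mapsto H(w,z)$. *)

theory Defs
  imports "HOL-Analysis.Analysis"
begin

definition S_fun :: "real \<Rightarrow> real \<Rightarrow> real" where
  "S_fun \<delta> x = (if \<bar>x\<bar> < sqrt \<delta> then x\<^sup>2 / (2 * sqrt \<delta>) + sqrt \<delta> / 2 else \<bar>x\<bar>)"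

definition S_deriv :: "real \<Rightarrow> real \<Rightarrow> real" where
  "S_deriv \<delta> x = (if \<bar>x\<bar> < sqrt \<delta> then x / sqrt \<delta> else sgn x)"

definition T_fun :: "real \<Rightarrow> real \<Rightarrow> real" where
  "T_fun \<delta> x = (if \<bar>x\<bar> \<le> sqrt \<delta> then 0 else x - \<delta> / x)"

definition T_vec :: "real \<Rightarrow> real ^ 'm \<Rightarrow> real ^ 'm" where
  "T_vec \<delta> v = (\<chi> i. T_fun \<delta> (v $ i))"

text \<open>Objective H(w,z); rows of X are x_i, so (y - X w)_i = y_i - x_i^T w.\<close>
definition H_fun :: "real ^ 'n ^ 'm \<Rightarrow> real ^ 'm \<Rightarrow> real \<Rightarrow> real ^ 'n \<Rightarrow> real ^ 'm \<Rightarrow> real" where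
  "H_fun X y \<delta> w z =
     (norm (y - X *v w - z))\<^sup>2 / 2
     + \<delta> * (\<Sum>i\<in>UNIV. \<bar>z $ i\<bar> / S_fun \<delta> ((y - X *v w) $ i))"

definition v_vec :: "real ^ 'n ^ 'm \<Rightarrow> real ^ 'm \<Rightarrow> real \<Rightarrow> real ^ 'n \<Rightarrow> real ^ 'm \<Rightarrow> real ^ 'm" where
  "v_vec X y \<delta> w z = (\<chi> i. \<bar>z $ i\<bar> * S_deriv \<delta> ((y - X *v w) $ i) / (S_fun \<delta> ((y - X *v w) $ i))\<^sup>2)"

definition gradH :: "real ^ 'n ^ 'm \<Rightarrow> real ^ 'm \<Rightarrow> real \<Rightarrow> real ^ 'n \<Rightarrow> real ^ 'm \<Rightarrow> real ^ 'n" where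
  "gradH X y \<delta> w z = - (transpose X *v (y - X *v w - z)) + \<delta> *\<^sub>R (transpose X *v v_vec X y \<delta> w z)"

primrec sarm :: "real ^ 'n ^ 'm \<Rightarrow> real ^ 'm \<Rightarrow> real \<Rightarrow> real \<Rightarrow> nat \<Rightarrow> (real ^ 'n) \<times> (real ^ 'm)" where
  "sarm X y \<delta> \<alpha> 0 = (0, 0)"
| "sarm X y \<delta> \<alpha> (Suc k) =
     (let w' = fst (sarm X y \<delta> \<alpha> k) - \<alpha> *\<^sub>R gradH X y \<delta> (fst (sarm X y \<delta> \<alpha> k)) (snd (sarm X y \<delta> \<alpha> k))
      in (w', T_vec \<delta> (y - X *v w')))"

definition frechet_subdiff :: "('a::real_inner \<Rightarrow> real) \<Rightarrow> 'a \<Rightarrow> 'a set" where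
  "frechet_subdiff f b =
     {u. Liminf (at b) (\<lambda>a. ereal ((f a - f b - inner u (a - b)) / norm (a - b))) \<ge> 0}"

definition limiting_subdiff :: "('a::real_inner \<Rightarrow> real) \<Rightarrow> 'a \<Rightarrow> 'a set" where
  "limiting_subdiff f x =
     {u. \<exists>xs us. xs \<longlonglongrightarrow> x \<and> (\<lambda>k. f (xs k)) \<longlonglongrightarrow> f x
               \<and> (\<forall>k. us k \<in> frechet_subdiff f (xs k)) \<and> us \<longlonglongrightarrow> u}"

end

theory Submission
  imports Defs
begin

(* The z-update is an exact minimization: H(w, .) splits into the scalar problems
   (r_i - z_i)^2/2 + c_i |z_i| with r = y - Xw and c_i = delta / S(r_i), which are solved
   by soft thresholding at level c_i, and that is exactly T(r_i).  So 0 is a limiting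
   subgradient in z at every iterate after the first.
   Substituting z = T(r) into the gradient gives grad_w H(w, T(y - Xw)) = X^T phi(y - Xw),
   where phi = reduced_grad delta is -r on |r| <= sqrt delta and -delta^2/r^3 outside,
   a 3-Lipschitz function.  Since z^k = T(y - X w^k) for k >= 1, the w-update is then a
   gradient step w' = w - alpha G(w) for the Lipschitz map G = reduced_gradH, and
   ||G(w')|| <= ||G(w') - G(w)|| + ||G(w)|| = ||G(w') - G(w)|| + ||w' - w|| / alpha. *)

lemma S_fun_pos:
  assumes "\<delta> > 0"
  shows "S_fun \<delta> x > 0"
  using assms by (auto simp: S_fun_def add_nonneg_pos)

lemma S_fun_le_sqrt:
  assumes "\<delta> > 0" and "\<bar>x\<bar> \<le> sqrt \<delta>"
  shows "S_fun \<delta> x \<le> sqrt \<delta>"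
proof (cases "\<bar>x\<bar> < sqrt \<delta>")
  case True
  have "x\<^sup>2 \<le> (sqrt \<delta>)\<^sup>2"
    using assms(2) by (metis abs_ge_zero power2_abs power_mono)
  then have "x\<^sup>2 / (2 * sqrt \<delta>) \<le> sqrt \<delta> / 2"
    using assms(1) by (simp add: divide_le_eq power2_eq_square)
  then show ?thesis using True by (simp add: S_fun_def)
qed (use assms in \<open>simp add: S_fun_def\<close>)

lemma sqrt_le_abs_iff:
  assumes "\<delta> \<ge> 0" shows "sqrt \<delta> \<le> \<bar>x\<bar> \<longleftrightarrow> \<delta> \<le> x\<^sup>2"
  using assms by (metis real_le_lsqrt real_sqrt_abs real_sqrt_le_iff abs_ge_zero real_sqrt_ge_zero)

lemma sqrt_less_abs_iff:
  assumes "\<delta> \<ge> 0" shows "sqrt \<delta> < \<bar>x\<bar> \<longleftrightarrow> \<delta> < x\<^sup>2"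
  using assms by (metis real_sqrt_abs real_sqrt_less_iff)

definition soft_threshold :: "real \<Rightarrow> real \<Rightarrow> real" where
  "soft_threshold c x = sgn x * max (\<bar>x\<bar> - c) 0"

lemma soft_threshold_minimizes:
  fixes c x a :: real
  assumes "c \<ge> 0"
  shows "(x - soft_threshold c x)\<^sup>2 / 2 + c * \<bar>soft_threshold c x\<bar> \<le> (x - a)\<^sup>2 / 2 + c * \<bar>a\<bar>"
proof (cases "\<bar>x\<bar> \<le> c")
  case True
  have "x * a \<le> c * \<bar>a\<bar>"
    using True by (metis abs_ge_self abs_ge_zero abs_mult mult_right_mono order_trans)
  moreover have "(x - a)\<^sup>2 = x\<^sup>2 - 2 * (x * a) + a\<^sup>2"
    by (simp add: power2_diff)
  moreover have "0 \<le> a\<^sup>2"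
    by simp
  ultimately have "x\<^sup>2 / 2 \<le> (x - a)\<^sup>2 / 2 + c * \<bar>a\<bar>"
    by linarith
  then show ?thesis
    using True by (simp add: soft_threshold_def)
next
  case outside: False
  let ?gap = "(x - a)\<^sup>2 / 2 + c * \<bar>a\<bar> - ((x - soft_threshold c x)\<^sup>2 / 2 + c * \<bar>soft_threshold c x\<bar>)"
  show ?thesis
  proof (cases "x > 0")
    case True
    then have st: "soft_threshold c x = x - c" and "x - c > 0"
      using outside by (auto simp: soft_threshold_def)
    from \<open>x - c > 0\<close> have "?gap = (x - c - a)\<^sup>2 / 2 + c * (\<bar>a\<bar> - a)"
      unfolding st by (simp add: power2_eq_square field_simps)
    moreover have "c * (\<bar>a\<bar> - a) \<ge> 0" "(x - c - a)\<^sup>2 / 2 \<ge> 0"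
      using assms by simp_all
    ultimately show ?thesis by linarith
  next
    case False
    then have st: "soft_threshold c x = x + c" and "x + c < 0"
      using outside assms by (auto simp: soft_threshold_def sgn_if)
    from \<open>x + c < 0\<close> have "?gap = (x + c - a)\<^sup>2 / 2 + c * (\<bar>a\<bar> + a)"
      unfolding st by (simp add: power2_eq_square field_simps)
    moreover have "c * (\<bar>a\<bar> + a) \<ge> 0" "(x + c - a)\<^sup>2 / 2 \<ge> 0"
      using assms by simp_all
    ultimately show ?thesis by linarith
  qed
qed

lemma T_fun_eq_soft_threshold:
  assumes "\<delta> > 0"
  shows "T_fun \<delta> x = soft_threshold (\<delta> / S_fun \<delta> x) x"
proof (cases "\<bar>x\<bar> \<le> sqrt \<delta>")
  case True
  have "\<bar>x\<bar> * S_fun \<delta> x \<le> sqrt \<delta> * sqrt \<delta>"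
    using assms True S_fun_le_sqrt[OF assms True] less_imp_le[OF S_fun_pos[OF assms]]
    by (intro mult_mono) auto
  then have "\<bar>x\<bar> \<le> \<delta> / S_fun \<delta> x"
    using assms S_fun_pos[OF assms] by (simp add: le_divide_eq)
  then show ?thesis using True by (simp add: T_fun_def soft_threshold_def)
next
  case False
  then have "\<delta> < x\<^sup>2" "x \<noteq> 0"
    using assms sqrt_less_abs_iff[of \<delta> x] by auto
  then have "\<delta> / \<bar>x\<bar> < \<bar>x\<bar>"
    by (simp add: divide_less_eq power2_eq_square)
  moreover have "S_fun \<delta> x = \<bar>x\<bar>"
    using False by (simp add: S_fun_def)
  moreover have "sgn x * (\<bar>x\<bar> - \<delta> / \<bar>x\<bar>) = x - \<delta> / x"
    using \<open>x \<noteq> 0\<close> by (cases "x > 0") simp_all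
  ultimately show ?thesis
    using False by (simp add: T_fun_def soft_threshold_def)
qed

lemma H_fun_eq_sum:
  "H_fun X y \<delta> w z = (\<Sum>i\<in>UNIV. ((y - X *v w) $ i - z $ i)\<^sup>2 / 2
                                  + \<delta> / S_fun \<delta> ((y - X *v w) $ i) * \<bar>z $ i\<bar>)"
  by (simp add: H_fun_def norm_vec_def L2_set_def sum_nonneg sum.distrib sum_distrib_left
      sum_divide_distrib)

lemma H_fun_T_vec_le:
  assumes "\<delta> > 0"
  shows "H_fun X y \<delta> w (T_vec \<delta> (y - X *v w)) \<le> H_fun X y \<delta> w z"
  unfolding H_fun_eq_sum
proof (rule sum_mono)
  fix i
  let ?r = "(y - X *v w) $ i"
  have "\<delta> / S_fun \<delta> ?r \<ge> 0"
    using assms S_fun_pos[OF assms, of ?r] by simp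
  then show "(?r - T_vec \<delta> (y - X *v w) $ i)\<^sup>2 / 2 + \<delta> / S_fun \<delta> ?r * \<bar>T_vec \<delta> (y - X *v w) $ i\<bar>
             \<le> (?r - z $ i)\<^sup>2 / 2 + \<delta> / S_fun \<delta> ?r * \<bar>z $ i\<bar>"
    unfolding T_vec_def vec_lambda_beta T_fun_eq_soft_threshold[OF assms]
    by (rule soft_threshold_minimizes)
qed

lemma frechet_subdiff_zero_at_min:
  assumes "\<And>a. f b \<le> f a"
  shows "0 \<in> frechet_subdiff f b"
  unfolding frechet_subdiff_def
  using assms by (auto intro!: Liminf_bounded always_eventually divide_nonneg_nonneg)

lemma frechet_subdiff_subset_limiting: "frechet_subdiff f x \<subseteq> limiting_subdiff f x"
  unfolding limiting_subdiff_def by (auto intro!: exI[of _ "\<lambda>k. x"] exI[of _ "\<lambda>k. u" for u])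

definition reduced_grad :: "real \<Rightarrow> real \<Rightarrow> real" where
  "reduced_grad \<delta> x = (if \<bar>x\<bar> \<le> sqrt \<delta> then - x else - (\<delta>\<^sup>2 / x ^ 3))"

lemma gradH_component_T_fun:
  assumes "\<delta> > 0"
  shows "- (x - T_fun \<delta> x) + \<delta> * (\<bar>T_fun \<delta> x\<bar> * S_deriv \<delta> x / (S_fun \<delta> x)\<^sup>2)
         = reduced_grad \<delta> x"
proof (cases "\<bar>x\<bar> \<le> sqrt \<delta>")
  case False
  then have "\<delta> < x\<^sup>2" "x \<noteq> 0"
    using assms sqrt_less_abs_iff[of \<delta> x] by auto
  have T: "T_fun \<delta> x = x - \<delta> / x"
    using False by (simp add: T_fun_def)
  have "x * T_fun \<delta> x = x\<^sup>2 - \<delta>"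
    using \<open>x \<noteq> 0\<close> unfolding T by (simp add: field_simps power2_eq_square)
  then have "x * T_fun \<delta> x > 0"
    using \<open>\<delta> < x\<^sup>2\<close> by simp
  then have sign: "\<bar>T_fun \<delta> x\<bar> * sgn x = T_fun \<delta> x"
    by (cases "x > 0") (auto simp: zero_less_mult_iff)
  have "S_fun \<delta> x = \<bar>x\<bar>" "S_deriv \<delta> x = sgn x"
    using False by (simp_all add: S_fun_def S_deriv_def)
  then have "- (x - T_fun \<delta> x) + \<delta> * (\<bar>T_fun \<delta> x\<bar> * S_deriv \<delta> x / (S_fun \<delta> x)\<^sup>2)
             = - (x - T_fun \<delta> x) + \<delta> * (T_fun \<delta> x / x\<^sup>2)"
    by (simp add: sign)
  also have "\<dots> = - (\<delta>\<^sup>2 / x ^ 3)"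
    using \<open>x \<noteq> 0\<close> unfolding T by (simp add: field_simps power2_eq_square power3_eq_cube)
  finally show ?thesis
    using False by (simp add: reduced_grad_def)
qed (simp add: T_fun_def reduced_grad_def)

definition reduced_gradH :: "real ^ 'n ^ 'm \<Rightarrow> real ^ 'm \<Rightarrow> real \<Rightarrow> real ^ 'n \<Rightarrow> real ^ 'n" where
  "reduced_gradH X y \<delta> w = transpose X *v (\<chi> i. reduced_grad \<delta> ((y - X *v w) $ i))"

lemma gradH_T_vec:
  assumes "\<delta> > 0"
  shows "gradH X y \<delta> w (T_vec \<delta> (y - X *v w)) = reduced_gradH X y \<delta> w"
proof -
  let ?r = "y - X *v w" and ?z = "T_vec \<delta> (y - X *v w)"
  have "gradH X y \<delta> w ?z = transpose X *v (- (?r - ?z) + \<delta> *\<^sub>R v_vec X y \<delta> w ?z)"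
    unfolding gradH_def by (simp only: matrix_vector_right_distrib matrix_vector_mult_scaleR vec.neg)
  also have "- (?r - ?z) + \<delta> *\<^sub>R v_vec X y \<delta> w ?z = (\<chi> i. reduced_grad \<delta> (?r $ i))"
    using gradH_component_T_fun[OF assms] by (simp add: vec_eq_iff v_vec_def T_vec_def)
  finally show ?thesis
    by (simp add: reduced_gradH_def)
qed

lemma reduced_grad_outside:
  assumes "\<delta> > 0" and "sqrt \<delta> \<le> \<bar>x\<bar>"
  shows "reduced_grad \<delta> x = - (\<delta>\<^sup>2 / x ^ 3)"
proof (cases "\<bar>x\<bar> = sqrt \<delta>")
  case True
  then have "x\<^sup>2 = \<delta>" using assms(1) by (metis power2_abs real_sqrt_pow2 less_imp_le)
  moreover have "x \<noteq> 0" using True assms(1) by auto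
  ultimately have "\<delta>\<^sup>2 / x ^ 3 = x"
    by (simp flip: \<open>x\<^sup>2 = \<delta>\<close> add: field_simps eval_nat_numeral)
  then show ?thesis using True by (simp add: reduced_grad_def)
qed (use assms in \<open>simp add: reduced_grad_def\<close>)

lemma lipschitz_on_inverse_cube:
  assumes "\<delta> > 0" and "convex U" and U: "U \<subseteq> {x. sqrt \<delta> \<le> \<bar>x\<bar>}"
  shows "3-lipschitz_on U (\<lambda>x. - (\<delta>\<^sup>2 / x ^ 3))"
proof (rule lipschitz_onI)
  fix a b assume "a \<in> U" "b \<in> U"
  have "norm ((- (\<delta>\<^sup>2 / a ^ 3)) - (- (\<delta>\<^sup>2 / b ^ 3))) \<le> 3 * norm (a - b)"
  proof (rule field_differentiable_bound[OF \<open>convex U\<close>])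
    fix x assume "x \<in> U"
    then have "x \<noteq> 0" "\<delta> \<le> x\<^sup>2" using U assms(1) sqrt_le_abs_iff[of \<delta> x] by fastforce+
    show "((\<lambda>x. - (\<delta>\<^sup>2 / x ^ 3)) has_field_derivative 3 * \<delta>\<^sup>2 / x ^ 4) (at x within U)"
      using \<open>x \<noteq> 0\<close> by (auto intro!: derivative_eq_intros simp: field_simps eval_nat_numeral)
    have "\<delta>\<^sup>2 \<le> (x\<^sup>2)\<^sup>2" using \<open>\<delta> \<le> x\<^sup>2\<close> assms(1) by (intro power_mono) auto
    then show "norm (3 * \<delta>\<^sup>2 / x ^ 4) \<le> 3"
      using \<open>x \<noteq> 0\<close> by (simp add: field_simps flip: power_mult)
  qed fact+
  then show "dist (- (\<delta>\<^sup>2 / a ^ 3)) (- (\<delta>\<^sup>2 / b ^ 3)) \<le> 3 * dist a b"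
    by (simp add: dist_norm)
qed simp

lemma lipschitz_on_reduced_grad:
  assumes "\<delta> > 0"
  shows "3-lipschitz_on UNIV (reduced_grad \<delta>)"
proof -
  define s where "s = sqrt \<delta>"
  have "s > 0" using assms by (simp add: s_def)
  have outer: "3-lipschitz_on V (reduced_grad \<delta>)" if "V \<in> {{..-s}, {s..}}" for V
  proof (rule lipschitz_on_transform)
    show "3-lipschitz_on V (\<lambda>x. - (\<delta>\<^sup>2 / x ^ 3))"
      using that \<open>s > 0\<close> by (intro lipschitz_on_inverse_cube assms) (auto simp: s_def)
    show "\<And>x. x \<in> V \<Longrightarrow> reduced_grad \<delta> x = - (\<delta>\<^sup>2 / x ^ 3)"
      using that \<open>s > 0\<close> by (auto intro!: reduced_grad_outside assms simp: s_def)
  qed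
  have "3-lipschitz_on {-s..s} (\<lambda>x. - x)"
    by (intro lipschitz_on_mono[OF lipschitz_on_minus[OF lipschitz_on_id]]) auto
  then have inner: "3-lipschitz_on {-s..s} (reduced_grad \<delta>)"
    by (rule lipschitz_on_transform) (auto simp: reduced_grad_def s_def)
  have cover: "{u..v} \<subseteq> (\<Union>V\<in>{{..-s}, {-s..s}, {s..}}. V)" for u v :: real
    by auto
  have on_intervals: "3-lipschitz_on {u..v} (reduced_grad \<delta>)" for u v
    by (rule lipschitz_on_closed_Union[where U = "\<lambda>V. V", OF _ _ _ _ cover]) (use outer inner in auto)
  show ?thesis
  proof (rule lipschitz_onI)
    fix a b :: real
    show "dist (reduced_grad \<delta> a) (reduced_grad \<delta> b) \<le> 3 * dist a b"
      by (rule lipschitz_onD[OF on_intervals[of "min a b" "max a b"]]) auto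
  qed simp
qed

lemma lipschitz_on_vec_lambda:
  fixes g :: "real \<Rightarrow> real"
  assumes "C-lipschitz_on UNIV g"
  shows "C-lipschitz_on UNIV (\<lambda>v :: real ^ 'm. \<chi> i. g (v $ i))"
proof (rule lipschitz_onI)
  fix u v :: "real ^ 'm"
  have "norm ((\<chi> i. g (u $ i)) - (\<chi> i. g (v $ i))) \<le> norm (C *\<^sub>R (u - v))"
  proof (rule norm_le_componentwise_cart)
    fix i
    show "norm (((\<chi> i. g (u $ i)) - (\<chi> i. g (v $ i))) $ i) \<le> norm ((C *\<^sub>R (u - v)) $ i)"
      using lipschitz_onD[OF assms, of "u $ i" "v $ i"] lipschitz_on_nonneg[OF assms]
      by (simp add: dist_real_def)
  qed
  then show "dist (\<chi> i. g (u $ i)) (\<chi> i. g (v $ i)) \<le> C * dist u v"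
    using lipschitz_on_nonneg[OF assms] by (simp add: dist_norm)
qed (rule lipschitz_on_nonneg[OF assms])

lemma reduced_gradH_lipschitzE:
  assumes "\<delta> > 0"
  obtains K where "K-lipschitz_on UNIV (reduced_gradH X y \<delta>)"
proof -
  obtain KX where KX: "KX-lipschitz_on UNIV (\<lambda>w. X *v w)"
    using bounded_linear.lipschitz_boundE[OF matrix_vector_mul_bounded_linear] by blast
  obtain KT where KT: "KT-lipschitz_on UNIV (\<lambda>v. transpose X *v v)"
    using bounded_linear.lipschitz_boundE[OF matrix_vector_mul_bounded_linear] by blast
  have "(0 + KX)-lipschitz_on UNIV (\<lambda>w. y - X *v w)"
    by (intro lipschitz_on_diff lipschitz_on_constant KX)
  then have "(3 * (0 + KX))-lipschitz_on UNIV (\<lambda>w. \<chi> i. reduced_grad \<delta> ((y - X *v w) $ i))"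
    using lipschitz_on_compose2[OF _ lipschitz_on_subset[OF
            lipschitz_on_vec_lambda[OF lipschitz_on_reduced_grad[OF assms]] subset_UNIV]]
    by blast
  then have "(KT * (3 * (0 + KX)))-lipschitz_on UNIV (reduced_gradH X y \<delta>)"
    unfolding reduced_gradH_def
    using lipschitz_on_compose2[OF _ lipschitz_on_subset[OF KT]] by blast
  then show ?thesis ..
qed

lemma gradient_step_norm_le:
  fixes G :: "'a::real_normed_vector \<Rightarrow> 'a"
  assumes "K-lipschitz_on UNIV G" and "\<alpha> > 0" and step: "w' = w - \<alpha> *\<^sub>R G w"
  shows "norm (G w') \<le> (K + 1 / \<alpha>) * norm (w' - w)"
proof -
  have "norm (G w') \<le> norm (G w) + norm (G w' - G w)"
    by (rule norm_triangle_sub)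
  also have "norm (G w) = norm (w' - w) / \<alpha>"
    using step \<open>\<alpha> > 0\<close> by simp
  also have "norm (G w' - G w) \<le> K * norm (w' - w)"
    by (rule lipschitz_on_normD[OF assms(1)]) simp_all
  finally show ?thesis
    by (simp add: algebra_simps)
qed

lemma snd_sarm_Suc: "snd (sarm X y \<delta> \<alpha> (Suc k)) = T_vec \<delta> (y - X *v fst (sarm X y \<delta> \<alpha> (Suc k)))"
  by (simp add: Let_def)

lemma fst_sarm_Suc:
  "fst (sarm X y \<delta> \<alpha> (Suc k))
     = fst (sarm X y \<delta> \<alpha> k) - \<alpha> *\<^sub>R gradH X y \<delta> (fst (sarm X y \<delta> \<alpha> k)) (snd (sarm X y \<delta> \<alpha> k))"
  by (simp add: Let_def)

lemma gradH_sarm_Suc: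
  assumes "\<delta> > 0"
  shows "gradH X y \<delta> (fst (sarm X y \<delta> \<alpha> (Suc k))) (snd (sarm X y \<delta> \<alpha> (Suc k)))
           = reduced_gradH X y \<delta> (fst (sarm X y \<delta> \<alpha> (Suc k)))"
  unfolding snd_sarm_Suc by (rule gradH_T_vec[OF assms])

lemma zero_in_limiting_subdiff_sarm_Suc:
  assumes "\<delta> > 0"
  shows "0 \<in> limiting_subdiff (H_fun X y \<delta> (fst (sarm X y \<delta> \<alpha> (Suc k)))) (snd (sarm X y \<delta> \<alpha> (Suc k)))"
  unfolding snd_sarm_Suc
  by (rule subsetD[OF frechet_subdiff_subset_limiting frechet_subdiff_zero_at_min])
    (rule H_fun_T_vec_le[OF assms])

lemma norm_gradH_sarm_le:
  assumes "\<delta> > 0" and "\<alpha> > 0" and K: "K-lipschitz_on UNIV (reduced_gradH X y \<delta>)"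
  shows "norm (gradH X y \<delta> (fst (sarm X y \<delta> \<alpha> (Suc (Suc k)))) (snd (sarm X y \<delta> \<alpha> (Suc (Suc k)))))
           \<le> (K + 1 / \<alpha>) * norm (sarm X y \<delta> \<alpha> (Suc (Suc k)) - sarm X y \<delta> \<alpha> (Suc k))"
proof -
  let ?w = "fst (sarm X y \<delta> \<alpha> (Suc k))" and ?w' = "fst (sarm X y \<delta> \<alpha> (Suc (Suc k)))"
  have step: "?w' = ?w - \<alpha> *\<^sub>R reduced_gradH X y \<delta> ?w"
    using fst_sarm_Suc[of X y \<delta> \<alpha> "Suc k"] unfolding gradH_sarm_Suc[OF \<open>\<delta> > 0\<close>] .
  have fst_le: "norm (?w' - ?w) \<le> norm (sarm X y \<delta> \<alpha> (Suc (Suc k)) - sarm X y \<delta> \<alpha> (Suc k))"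
    by (metis fst_diff norm_fst_le prod.collapse)
  have "norm (reduced_gradH X y \<delta> ?w') \<le> (K + 1 / \<alpha>) * norm (?w' - ?w)"
    by (rule gradient_step_norm_le[OF K \<open>\<alpha> > 0\<close> step])
  also have "\<dots> \<le> (K + 1 / \<alpha>) * norm (sarm X y \<delta> \<alpha> (Suc (Suc k)) - sarm X y \<delta> \<alpha> (Suc k))"
    using fst_le lipschitz_on_nonneg[OF K] \<open>\<alpha> > 0\<close> by (intro mult_left_mono) simp_all
  finally show ?thesis
    unfolding gradH_sarm_Suc[OF \<open>\<delta> > 0\<close>] .
qed

lemma subgradient_bound_sarm:
  assumes "\<delta> > 0" and "\<alpha> > 0" and K: "K-lipschitz_on UNIV (reduced_gradH X y \<delta>)" and "k \<ge> 1"
  shows "\<exists>B \<in> limiting_subdiff (H_fun X y \<delta> (fst (sarm X y \<delta> \<alpha> (k + 1)))) (snd (sarm X y \<delta> \<alpha> (k + 1))).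
           norm (gradH X y \<delta> (fst (sarm X y \<delta> \<alpha> (k + 1))) (snd (sarm X y \<delta> \<alpha> (k + 1))), B)
             \<le> (K + 1 / \<alpha>) * norm (sarm X y \<delta> \<alpha> (k + 1) - sarm X y \<delta> \<alpha> k)"
proof -
  obtain j where j: "k = Suc j" "k + 1 = Suc (Suc j)"
    using \<open>k \<ge> 1\<close> by (cases k) auto
  show ?thesis
    unfolding j(2) unfolding j(1)
    by (intro bexI[of _ 0] zero_in_limiting_subdiff_sarm_Suc[OF \<open>\<delta> > 0\<close>])
      (use norm_gradH_sarm_le[OF assms(1-3), of j] in \<open>simp add: norm_Pair del: sarm.simps\<close>)
qed

theorem theorem2:
  fixes X :: "real ^ 'n ^ 'm" and y :: "real ^ 'm" and \<delta> L \<alpha> :: real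
  assumes precond: "transpose X ** X = mat 1"
    and delta_pos: "\<delta> > 0"
    and L_pos: "L > 0"
    and upper_bound: "\<And>w w' z. (\<forall>i. \<bar>z $ i\<bar> \<le> S_fun \<delta> ((y - X *v w) $ i)) \<Longrightarrow>
         H_fun X y \<delta> w' z \<le> H_fun X y \<delta> w z + inner (gradH X y \<delta> w z) (w' - w) + L / 2 * (norm (w' - w))\<^sup>2"
    and alpha_pos: "0 < \<alpha>" and alpha_le: "\<alpha> \<le> 2 / L"
  shows "\<exists>\<rho>2 > 0. \<forall>k \<ge> 1.
           \<exists>B \<in> limiting_subdiff (H_fun X y \<delta> (fst (sarm X y \<delta> \<alpha> (k + 1)))) (snd (sarm X y \<delta> \<alpha> (k + 1))).
             norm (gradH X y \<delta> (fst (sarm X y \<delta> \<alpha> (k + 1))) (snd (sarm X y \<delta> \<alpha> (k + 1))), B)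
               \<le> \<rho>2 * norm (sarm X y \<delta> \<alpha> (k + 1) - sarm X y \<delta> \<alpha> k)"
proof -
  obtain K where K: "K-lipschitz_on UNIV (reduced_gradH X y \<delta>)"
    using reduced_gradH_lipschitzE[OF delta_pos] .
  have "K + 1 / \<alpha> > 0"
    using lipschitz_on_nonneg[OF K] alpha_pos by (simp add: add_nonneg_pos)
  then show ?thesis
    using subgradient_bound_sarm[OF delta_pos alpha_pos K] by blast
qed

end
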